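(* Let $X=\{x_0,\ldots,x_m\}$ and $\tilde X=\{\tilde x_1,\ldots,\tilde x_q\}$ (commuting). The multiplicative static feedback product $c\,\bar{@}\,d:=c\,\tilde\circ\,\delta_{(d^{-1}\circ c)^{\circ-1}}$ (with $d^{-1}\circ c$ the Wiener-Fliess composition product) is a right group action of the Abelian group $(\mathbb{R}^m_{pi}[[\tilde X]],\cdot,\mathbb 1)$ on the set of proper series in $\mathbb{R}^q\langle\langle X\rangle\rangle$; that is, for all proper $c\in\mathbb{R}^q\langle\langle X\rangle\rangle$ and all purely improper $d_1,d_2\in\mathbb{R}^m[[\tilde X]]$, $c\,\bar{@}\,\mathbb 1=c$ and $(c\,\bar{@}\,d_1)\,\bar{@}\,d_2=c\,\bar{@}\,(d_1\cdot d_2)$.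
   Context: Series conventions: $\mathbb{R}^\ell\langle\langle X\rangle\rangle$ noncommutative formal power series with coefficients in $\mathbb{R}^\ell$, $\mathbb{R}^m[[\tilde X]]$ commutative formal power series with coefficients in $\mathbb{R}^m$; componentwise products; proper = zero constant term; purely improper = each component has nonzero constant term; $\mathbb{R}^m_{pi}[[\tilde X]]$ the purely improper commutative series; $\cdot$ the Cauchy product $(d\cdot d',\eta)=\sum_{\zeta\nu=\eta}(d,\zeta)(d',\nu)$; $d^{-1}$ the Cauchy inverse; $\mathbb 1=[1\cdots1]^t$. Shuffle product $\sqcup\!\sqcup$: bilinear, $(x_i\eta)\sqcup\!\sqcup(x_j\xi)=x_i(\eta\sqcup\!\sqcup x_j\xi)+x_j(x_i\eta\sqcup\!\sqcup\xi)$, $\eta\sqcup\!\sqcup\emptyset=\emptyset\sqcup\!\sqcup\eta=\eta$; $g^{\sqcup\!\sqcup-1}$ componentwise shuffle inverse. Wiener-Fliess composition for proper $c$: $d\circ c=\sum_{\tilde\eta}(d,\tilde\eta)c^{\sqcup\!\sqcup\tilde\eta}$, $c^{\sqcup\!\sqcup\emptyset}=1$, $c^{\sqcup\!\sqcup\tilde x_i\tilde\eta}=c_i\sqcup\!\sqcup c^{\sqcup\!\sqcup\tilde\eta}$. Multiplicative mixed composition: $c\,\tilde\circ\,\delta_g=\sum_\eta(c,\eta)\bar\phi_g(\eta)(\mathbf 1)$, $\mathbf 1=1\emptyset$, $\bar\phi_g(x_0)(w)=x_0w$, $\bar\phi_g(x_i)(w)=x_i(g_i\sqcup\!\sqcup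 w)$ ($i\ge1$), extended multiplicatively (concatenation to composition). For purely improper $g\in\mathbb{R}^m\langle\langle X\rangle\rangle$, $g^{\circ-1}$ is the unique $h\in\mathbb{R}^m\langle\langle X\rangle\rangle$ with $h=g^{\sqcup\!\sqcup-1}\,\tilde\circ\,\delta_h$. *)

theory Defs
  imports "HOL-Analysis.Analysis" "HOL-Library.Multiset"
begin

text \<open>Alphabet X = {x_0,...,x_m} is represented by the type 'm option, with
  None = x_0 and Some i = x_i (i ranging over a finite type 'm of m elements).
  A scalar noncommutative series is a function from words to coefficients;
  a series in R^l<<X>> is a function from a finite index type to scalar series.
  Commutative monomials over X~ = {x~_1,...,x~_q} are multisets over a finite type 'q.\<close>

type_synonym 'a ncs = "'a list \<Rightarrow> real"

definition one_s :: "'a ncs" where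
  "one_s w = (if w = [] then 1 else 0)"

definition lcat :: "'a \<Rightarrow> 'a ncs \<Rightarrow> 'a ncs" where
  "lcat a s w = (case w of [] \<Rightarrow> 0 | b # w' \<Rightarrow> if b = a then s w' else 0)"

fun shw :: "'a list \<Rightarrow> 'a list \<Rightarrow> 'a ncs" where
  "shw [] v = (\<lambda>w. if w = v then 1 else 0)"
| "shw u [] = (\<lambda>w. if w = u then 1 else 0)"
| "shw (a # u) (b # v) = (\<lambda>w. lcat a (shw u (b # v)) w + lcat b (shw (a # u) v) w)"

definition shuffle :: "'a ncs \<Rightarrow> 'a ncs \<Rightarrow> 'a ncs" where
  "shuffle c d w = infsum (\<lambda>(u, v). c u * d v * shw u v w) UNIV"

definition shuffle_inv :: "'a ncs \<Rightarrow> 'a ncs" where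
  "shuffle_inv g = (THE h. shuffle g h = one_s)"

type_synonym 'q cs = "'q multiset \<Rightarrow> real"

definition one_c :: "'q cs" where
  "one_c \<eta> = (if \<eta> = {#} then 1 else 0)"

definition cauchy :: "'q cs \<Rightarrow> 'q cs \<Rightarrow> 'q cs" where
  "cauchy d d' \<eta> = (\<Sum>(\<zeta>, \<nu>) \<in> {(\<zeta>, \<nu>). \<zeta> + \<nu> = \<eta>}. d \<zeta> * d' \<nu>)"

definition cauchy_inv :: "'q cs \<Rightarrow> 'q cs" where
  "cauchy_inv d = (THE h. cauchy d h = one_c)"

definition proper :: "('i \<Rightarrow> 'a ncs) \<Rightarrow> bool" where
  "proper c \<longleftrightarrow> (\<forall>j. c j [] = 0)"

definition purely_improper_c :: "('i \<Rightarrow> 'q cs) \<Rightarrow> bool" where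
  "purely_improper_c d \<longleftrightarrow> (\<forall>i. d i {#} \<noteq> 0)"

definition shuf_pow :: "('q \<Rightarrow> 'a ncs) \<Rightarrow> 'q multiset \<Rightarrow> 'a ncs" where
  "shuf_pow c \<eta> = fold_mset (\<lambda>i s. shuffle (c i) s) one_s \<eta>"

definition wf_comp :: "('i \<Rightarrow> 'q cs) \<Rightarrow> ('q \<Rightarrow> 'a ncs) \<Rightarrow> ('i \<Rightarrow> 'a ncs)" where
  "wf_comp d c = (\<lambda>i w. infsum (\<lambda>\<eta>. d i \<eta> * shuf_pow c \<eta> w) UNIV)"

text \<open>phibar_g(eta), extended multiplicatively (concatenation to composition)\<close>
fun phibar :: "('m \<Rightarrow> 'm option ncs) \<Rightarrow> 'm option list \<Rightarrow> 'm option ncs \<Rightarrow> 'm option ncs" where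
  "phibar g [] s = s"
| "phibar g (None # \<eta>) s = lcat None (phibar g \<eta> s)"
| "phibar g (Some i # \<eta>) s = lcat (Some i) (shuffle (g i) (phibar g \<eta> s))"

definition mixed_comp :: "'m option ncs \<Rightarrow> ('m \<Rightarrow> 'm option ncs) \<Rightarrow> 'm option ncs" where
  "mixed_comp c g w = infsum (\<lambda>\<eta>. c \<eta> * phibar g \<eta> one_s w) UNIV"

definition comp_inv :: "('m \<Rightarrow> 'm option ncs) \<Rightarrow> ('m \<Rightarrow> 'm option ncs)" where
  "comp_inv g = (THE h. h = (\<lambda>i. mixed_comp (shuffle_inv (g i)) h))"

definition sfb :: "('q \<Rightarrow> 'm option ncs) \<Rightarrow> ('m \<Rightarrow> 'q cs) \<Rightarrow> ('q \<Rightarrow> 'm option ncs)" where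
  "sfb c d = (\<lambda>j. mixed_comp (c j) (comp_inv (wf_comp (\<lambda>i. cauchy_inv (d i)) c)))"

end

theory Submission
  imports Defs
begin

text \<open>
  Every operation involved is causal: the coefficient of a word w in the result only depends on
  coefficients at words of length at most |w|, and each infinite sum in the definitions has finite
  support at every w. Hence the shuffle, Cauchy and feedback inverses are the unique solutions of
  triangular recursions, and identities between series follow by induction on the length of w
  from the first-letter recursions of the shuffle product and of mixed composition.

  Mixed composition is a shuffle homomorphism in its first argument and associates as
  mixed_comp (mixed_comp c g) h = mixed_comp c (fb_prod g h), where fb_prod is the product of the
  multiplicative feedback group; comp_inv G is the inverse of G in that group. Composition with
  a proper series c turns Cauchy products into shuffle products, so d |-> d^{-1} o c maps 1 to 1
  and d1 d2 to the shuffle product of the images of d1 and d2. This gives sfb c 1 = c at once and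
  reduces sfb (sfb c d1) d2 = sfb c (d1 d2) to the group identity
  comp_inv (G sh H) = fb_prod (comp_inv G) (comp_inv (H o~ comp_inv G)).
\<close>

lemma has_sum_finite_support:
  assumes "finite S" and "\<And>x. x \<notin> S \<Longrightarrow> f x = 0"
  shows "(f has_sum sum f S) UNIV"
proof -
  have "(f has_sum sum f S) S" using \<open>finite S\<close> by (rule has_sum_finite)
  then show ?thesis by (rule has_sum_cong_neutral[THEN iffD1, rotated -1]) (use assms(2) in auto)
qed

lemma has_sum_reindex_range:
  assumes "inj h" and "\<And>x. x \<notin> range h \<Longrightarrow> f x = 0"
  shows "(f has_sum s) UNIV \<longleftrightarrow> ((f \<circ> h) has_sum s) UNIV"
proof -
  have "(f has_sum s) UNIV \<longleftrightarrow> (f has_sum s) (range h)"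
    by (rule has_sum_cong_neutral) (use assms(2) in auto)
  also have "\<dots> \<longleftrightarrow> ((f \<circ> h) has_sum s) UNIV"
    using has_sum_reindex[OF assms(1)] .
  finally show ?thesis .
qed

lemma wf_fixpoint_ex1:
  fixes T :: "('x \<Rightarrow> 'b) \<Rightarrow> 'x \<Rightarrow> 'b"
  assumes "wf R" and local: "\<And>f g x. (\<And>y. (y, x) \<in> R \<Longrightarrow> f y = g y) \<Longrightarrow> T f x = T g x"
  shows "\<exists>!h. T h = h"
proof (rule ex1I)
  have "adm_wf R T" unfolding adm_wf_def by (blast intro: local)
  from wfrec_fixpoint[OF \<open>wf R\<close> this]
  show fixed: "T (wfrec R T) = wfrec R T" by (rule sym)
  fix h assume h: "T h = h"
  have "h x = wfrec R T x" for x
    using \<open>wf R\<close>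
  proof (induction x rule: wf_induct_rule)
    case (less x)
    then have "T h x = T (wfrec R T) x" by (rule local)
    then show ?case by (simp add: h fixed)
  qed
  then show "h = wfrec R T" ..
qed

lemma triangular_equation_ex1:
  fixes M :: "('x \<Rightarrow> real) \<Rightarrow> 'x \<Rightarrow> real"
  assumes "wf R" and "a \<noteq> 0"
    and triangular: "\<And>s t x. (\<And>y. (y, x) \<in> R \<Longrightarrow> s y = t y) \<Longrightarrow>
                       M s x - a * s x = M t x - a * t x"
  shows "\<exists>!h. M h = e"
proof -
  define T where "T h x = (e x - (M h x - a * h x)) / a" for h x
  have "T h x = h x \<longleftrightarrow> M h x = e x" for h x
    using \<open>a \<noteq> 0\<close> unfolding T_def by (auto simp: divide_eq_eq algebra_simps)
  then have "T h = h \<longleftrightarrow> M h = e" for h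
    by (simp add: fun_eq_iff)
  moreover have "\<exists>!h. T h = h"
  proof (rule wf_fixpoint_ex1[OF \<open>wf R\<close>])
    fix s t :: "'x \<Rightarrow> real" and x assume "\<And>y. (y, x) \<in> R \<Longrightarrow> s y = t y"
    then show "T s x = T t x" unfolding T_def by (metis triangular)
  qed
  ultimately show ?thesis by simp
qed

section \<open>Shuffle product\<close>

definition lshift :: "'a \<Rightarrow> 'a ncs \<Rightarrow> 'a ncs" where
  "lshift a s = (\<lambda>w. s (a # w))"

lemma lcat_Nil [simp]: "lcat a s [] = 0"
  by (simp add: lcat_def)

lemma lcat_Cons [simp]: "lcat a s (b # w) = (if b = a then s w else 0)"
  by (simp add: lcat_def)

lemma shw_Nil_right [simp]: "shw u [] = (\<lambda>w. if w = u then 1 else 0)"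
  by (cases u) auto

lemma shw_nonzero:
  "shw u v w \<noteq> 0 \<Longrightarrow> length w = length u + length v \<and> set u \<subseteq> set w \<and> set v \<subseteq> set w"
proof (induction u v arbitrary: w rule: shw.induct)
  case (1 v)
  then show ?case by (simp split: if_splits)
next
  case (2 v va)
  then show ?case by (auto split: if_splits)
next
  case (3 a u b v)
  obtain x w' where "w = x # w'"
    and "x = a \<and> shw u (b # v) w' \<noteq> 0 \<or> x = b \<and> shw (a # u) v w' \<noteq> 0"
    using "3.prems" by (cases w) (auto split: if_splits)
  then show ?case using "3.IH"[of w'] by auto
qed

lemma shw_at_Nil: "shw u v [] = (if u = [] \<and> v = [] then 1 else 0)"
  by (cases u; cases v) auto

lemma shw_at_Cons: "shw u v (a # w) =
   (case u of [] \<Rightarrow> 0 | b # u' \<Rightarrow> if b = a then shw u' v w else 0) +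
   (case v of [] \<Rightarrow> 0 | b # v' \<Rightarrow> if b = a then shw u v' w else 0)"
  by (cases u; cases v) auto

lemma shuffle_has_sum: "((\<lambda>(u, v). c u * d v * shw u v w) has_sum shuffle c d w) UNIV"
proof -
  let ?f = "\<lambda>(u, v). c u * d v * shw u v w"
  let ?W = "{u. set u \<subseteq> set w \<and> length u \<le> length w}"
  have "(?f has_sum sum ?f (?W \<times> ?W)) UNIV"
  proof (rule has_sum_finite_support)
    fix p assume "p \<notin> ?W \<times> ?W"
    then show "?f p = 0" using shw_nonzero[of "fst p" "snd p" w] by (cases p) auto
  qed (simp add: finite_lists_length_le)
  moreover from this have "infsum ?f UNIV = sum ?f (?W \<times> ?W)" by (rule infsumI)
  ultimately show ?thesis unfolding shuffle_def by simp
qed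

lemma shuffle_Nil: "shuffle c d [] = c [] * d []"
proof -
  let ?f = "\<lambda>(u, v). c u * d v * shw u v []"
  have "(?f has_sum sum ?f {([], [])}) UNIV"
  proof (rule has_sum_finite_support)
    show "?f p = 0" if "p \<notin> {([], [])}" for p
      using that by (cases p) (auto simp: shw_at_Nil)
  qed simp
  then have "(?f has_sum c [] * d []) UNIV" by (simp add: shw_at_Nil)
  with shuffle_has_sum show ?thesis by (rule has_sum_unique)
qed

lemma shuffle_Cons: "shuffle c d (a # w) = shuffle (lshift a c) d w + shuffle c (lshift a d) w"
proof -
  let ?L = "\<lambda>(u, v). c u * d v * (case u of [] \<Rightarrow> 0 | b # u' \<Rightarrow> if b = a then shw u' v w else 0)"
  let ?R = "\<lambda>(u, v). c u * d v * (case v of [] \<Rightarrow> 0 | b # v' \<Rightarrow> if b = a then shw u v' w else 0)"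
  have "(?L has_sum shuffle (lshift a c) d w) UNIV"
  proof (rule has_sum_reindex_range[THEN iffD2])
    show "inj (\<lambda>(u, v). (a # u, v))" by (simp add: inj_def)
    show "?L p = 0" if "p \<notin> range (\<lambda>(u, v). (a # u, v))" for p
    proof (cases p)
      case (Pair u v)
      with that have "(u, v) \<noteq> (\<lambda>(u, v). (a # u, v)) (u', v)" for u' by blast
      then show ?thesis using Pair by (cases u) auto
    qed
    show "((?L \<circ> (\<lambda>(u, v). (a # u, v))) has_sum shuffle (lshift a c) d w) UNIV"
      using shuffle_has_sum[of "lshift a c" d w] by (simp add: o_def case_prod_unfold lshift_def)
  qed
  moreover have "(?R has_sum shuffle c (lshift a d) w) UNIV"
  proof (rule has_sum_reindex_range[THEN iffD2])
    show "inj (\<lambda>(u, v). (u, a # v))" by (simp add: inj_def)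
    show "?R p = 0" if "p \<notin> range (\<lambda>(u, v). (u, a # v))" for p
    proof (cases p)
      case (Pair u v)
      with that have "(u, v) \<noteq> (\<lambda>(u, v). (u, a # v)) (u, v')" for v' by blast
      then show ?thesis using Pair by (cases v) auto
    qed
    show "((?R \<circ> (\<lambda>(u, v). (u, a # v))) has_sum shuffle c (lshift a d) w) UNIV"
      using shuffle_has_sum[of c "lshift a d" w] by (simp add: o_def case_prod_unfold lshift_def)
  qed
  ultimately have "((\<lambda>p. ?L p + ?R p) has_sum shuffle (lshift a c) d w + shuffle c (lshift a d) w) UNIV"
    by (rule has_sum_add)
  moreover have "(\<lambda>(u, v). c u * d v * shw u v (a # w)) = (\<lambda>p. ?L p + ?R p)"
    by (simp add: fun_eq_iff shw_at_Cons algebra_simps)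
  ultimately show ?thesis
    unfolding shuffle_def by (simp add: infsumI)
qed

lemma shuffle_commute: "shuffle c d = shuffle d c"
proof
  show "shuffle c d w = shuffle d c w" for w
    by (induction w arbitrary: c d) (simp_all add: shuffle_Nil shuffle_Cons)
qed

lemma shuffle_sum_left:
  "shuffle (\<lambda>v. \<Sum>j\<in>A. r j * f j v) d w = (\<Sum>j\<in>A. r j * shuffle (f j) d w)"
  by (induction w arbitrary: f d)
     (simp_all add: shuffle_Nil shuffle_Cons lshift_def sum_distrib_right sum.distrib
       distrib_left mult.assoc)

lemma shuffle_sum_right:
  "shuffle d (\<lambda>v. \<Sum>j\<in>A. r j * f j v) w = (\<Sum>j\<in>A. r j * shuffle d (f j) w)"
  by (simp add: shuffle_commute[of d] shuffle_sum_left)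

lemma shuffle_zero_left [simp]: "shuffle (\<lambda>v. 0) d = (\<lambda>v. 0)"
  using shuffle_sum_left[where A = "{}"] by auto

lemma shuffle_add_left: "shuffle (\<lambda>v. c v + c' v) d w = shuffle c d w + shuffle c' d w"
  by (induction w arbitrary: c c' d) (simp_all add: shuffle_Nil shuffle_Cons lshift_def algebra_simps)

lemma shuffle_add_right: "shuffle d (\<lambda>v. c v + c' v) w = shuffle d c w + shuffle d c' w"
  by (simp add: shuffle_commute[of d] shuffle_add_left)

lemma shuffle_one_left [simp]: "shuffle one_s d = d"
proof
  show "shuffle one_s d w = d w" for w
    by (induction w arbitrary: d) (simp_all add: shuffle_Nil shuffle_Cons one_s_def lshift_def)
qed

lemma shuffle_one_right [simp]: "shuffle d one_s = d"
  by (simp add: shuffle_commute[of d])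

lemma lshift_shuffle:
  "lshift a (shuffle c d) = (\<lambda>w. shuffle (lshift a c) d w + shuffle c (lshift a d) w)"
  by (simp add: lshift_def shuffle_Cons)

lemma shuffle_assoc: "shuffle (shuffle c d) e = shuffle c (shuffle d e)"
proof
  show "shuffle (shuffle c d) e w = shuffle c (shuffle d e) w" for w
    by (induction w arbitrary: c d e)
       (simp_all add: shuffle_Nil shuffle_Cons lshift_shuffle shuffle_add_left shuffle_add_right)
qed

lemma shuffle_left_commute: "shuffle c (shuffle d e) = shuffle d (shuffle c e)"
  by (metis shuffle_assoc shuffle_commute)

lemmas shuffle_ac = shuffle_assoc shuffle_commute shuffle_left_commute

definition vanishes_below :: "nat \<Rightarrow> 'a ncs \<Rightarrow> bool" where
  "vanishes_below k s \<longleftrightarrow> (\<forall>w. length w < k \<longrightarrow> s w = 0)"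

lemma vanishes_below_0 [simp]: "vanishes_below 0 s"
  by (simp add: vanishes_below_def)

lemma vanishes_below_shuffle:
  assumes "vanishes_below k c" and "vanishes_below l d"
  shows "vanishes_below (k + l) (shuffle c d)"
  unfolding vanishes_below_def
proof (intro allI impI)
  fix w :: "'a list"
  show "length w < k + l \<Longrightarrow> shuffle c d w = 0"
    using assms unfolding vanishes_below_def
  proof (induction w arbitrary: c d k l)
    case (Cons a w)
    have "shuffle (lshift a c) d w = 0"
      by (rule Cons.IH[where k = "k - 1" and l = l]) (use Cons.prems in \<open>auto simp: lshift_def\<close>)
    moreover have "shuffle c (lshift a d) w = 0"
      by (rule Cons.IH[where k = k and l = "l - 1"]) (use Cons.prems in \<open>auto simp: lshift_def\<close>)
    ultimately show ?case by (simp add: shuffle_Cons)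
  qed (auto simp: shuffle_Nil)
qed

lemma vanishes_below_shuffle_right: "vanishes_below l d \<Longrightarrow> vanishes_below l (shuffle c d)"
  using vanishes_below_shuffle[of 0 c l d] by simp

lemma shuffle_cong_upto:
  assumes "\<And>v. length v \<le> length w \<Longrightarrow> c v = c' v"
    and "\<And>v. length v \<le> length w \<Longrightarrow> d v = d' v"
  shows "shuffle c d w = shuffle c' d' w"
  using assms
proof (induction w arbitrary: c c' d d')
  case (Cons a w)
  have "shuffle (lshift a c) d w = shuffle (lshift a c') d' w"
    by (rule Cons.IH) (simp_all add: lshift_def Cons.prems)
  moreover have "shuffle c (lshift a d) w = shuffle c' (lshift a d') w"
    by (rule Cons.IH) (simp_all add: lshift_def Cons.prems)
  ultimately show ?case by (simp add: shuffle_Cons)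
qed (simp add: shuffle_Nil)

lemma shuffle_triangular:
  assumes "\<And>v. length v < length w \<Longrightarrow> h v = h' v"
  shows "shuffle g h w - g [] * h w = shuffle g h' w - g [] * h' w"
  using assms
proof (induction w arbitrary: g h h')
  case (Cons a w)
  have "shuffle (lshift a g) h w = shuffle (lshift a g) h' w"
    by (rule shuffle_cong_upto) (simp_all add: Cons.prems)
  moreover have "shuffle g (lshift a h) w - g [] * lshift a h w =
                 shuffle g (lshift a h') w - g [] * lshift a h' w"
    by (rule Cons.IH) (simp add: lshift_def Cons.prems)
  ultimately show ?case by (simp add: shuffle_Cons lshift_def)
qed (simp add: shuffle_Nil)

lemma shuffle_inv_ex1:
  assumes "g [] \<noteq> 0"
  shows "\<exists>!h. shuffle g h = one_s"
proof (rule triangular_equation_ex1[where R = "Wellfounded.measure length"])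
  fix s t :: "'a ncs" and x
  assume "\<And>y. (y, x) \<in> Wellfounded.measure length \<Longrightarrow> s y = t y"
  then show "shuffle g s x - g [] * s x = shuffle g t x - g [] * t x"
    by (intro shuffle_triangular) simp
qed (simp_all add: assms)

lemma shuffle_inv: "g [] \<noteq> 0 \<Longrightarrow> shuffle g (shuffle_inv g) = one_s"
  unfolding shuffle_inv_def by (rule theI'[OF shuffle_inv_ex1])

lemma shuffle_inv_unique: "g [] \<noteq> 0 \<Longrightarrow> shuffle g h = one_s \<Longrightarrow> shuffle_inv g = h"
  unfolding shuffle_inv_def by (rule the1_equality[OF shuffle_inv_ex1])

lemma shuffle_inv_shuffle:
  assumes "f [] \<noteq> 0" and "g [] \<noteq> 0"
  shows "shuffle_inv (shuffle f g) = shuffle (shuffle_inv f) (shuffle_inv g)"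
proof (rule shuffle_inv_unique)
  show "shuffle f g [] \<noteq> 0" using assms by (simp add: shuffle_Nil)
  have "shuffle (shuffle f g) (shuffle (shuffle_inv f) (shuffle_inv g)) =
        shuffle (shuffle f (shuffle_inv f)) (shuffle g (shuffle_inv g))"
    by (simp only: shuffle_assoc shuffle_left_commute[of g])
  then show "shuffle (shuffle f g) (shuffle (shuffle_inv f) (shuffle_inv g)) = one_s"
    using assms by (simp add: shuffle_inv)
qed

section \<open>Cauchy product\<close>

lemma finite_multisets_size_le:
  assumes "finite A"
  shows "finite {M. set_mset M \<subseteq> A \<and> size M \<le> n}"
proof -
  have "{M. set_mset M \<subseteq> A \<and> size M \<le> n} = (\<Union>k\<le>n. multisets_of_size A k)"
    by (auto simp: multisets_of_size_def)
  then show ?thesis using assms by auto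
qed

lemma finite_splittings: "finite {(\<zeta>, \<nu>). \<zeta> + \<nu> = (\<eta> :: 'a multiset)}"
proof (rule finite_subset)
  let ?S = "{M. set_mset M \<subseteq> set_mset \<eta> \<and> size M \<le> size \<eta>}"
  show "{(\<zeta>, \<nu>). \<zeta> + \<nu> = \<eta>} \<subseteq> ?S \<times> ?S" by auto
  show "finite (?S \<times> ?S)" by (simp add: finite_multisets_size_le)
qed

lemma cauchy_split:
  "cauchy d h \<eta> = d {#} * h \<eta> + (\<Sum>(\<zeta>, \<nu>) \<in> {(\<zeta>, \<nu>). \<zeta> + \<nu> = \<eta> \<and> \<zeta> \<noteq> {#}}. d \<zeta> * h \<nu>)"
proof -
  have "{(\<zeta>, \<nu>). \<zeta> + \<nu> = \<eta>} = insert ({#}, \<eta>) {(\<zeta>, \<nu>). \<zeta> + \<nu> = \<eta> \<and> \<zeta> \<noteq> {#}}"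
    by auto
  moreover have "finite {(\<zeta>, \<nu>). \<zeta> + \<nu> = \<eta> \<and> \<zeta> \<noteq> {#}}"
    by (rule finite_subset[OF _ finite_splittings[of \<eta>]]) auto
  ultimately show ?thesis unfolding cauchy_def by simp
qed

lemma cauchy_empty: "cauchy d h {#} = d {#} * h {#}"
proof -
  have "{(\<zeta>, \<nu>). \<zeta> + \<nu> = {#}} = {({#}, {#})}" by auto
  then show ?thesis unfolding cauchy_def by simp
qed

lemma cauchy_one_left: "cauchy one_c h = h"
  by (simp add: fun_eq_iff cauchy_split one_c_def case_prod_beta)

lemma cauchy_triangular:
  assumes "\<And>\<nu>. size \<nu> < size \<eta> \<Longrightarrow> s \<nu> = t \<nu>"
  shows "cauchy d s \<eta> - d {#} * s \<eta> = cauchy d t \<eta> - d {#} * t \<eta>"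
proof -
  have "s \<nu> = t \<nu>" if "\<zeta> + \<nu> = \<eta>" and "\<zeta> \<noteq> {#}" for \<zeta> \<nu>
  proof (rule assms)
    have "size \<eta> = size \<zeta> + size \<nu>" using that(1) by auto
    with that(2) show "size \<nu> < size \<eta>" by (simp add: nonempty_has_size)
  qed
  then have "(\<Sum>(\<zeta>, \<nu>) \<in> {(\<zeta>, \<nu>). \<zeta> + \<nu> = \<eta> \<and> \<zeta> \<noteq> {#}}. d \<zeta> * s \<nu>) =
             (\<Sum>(\<zeta>, \<nu>) \<in> {(\<zeta>, \<nu>). \<zeta> + \<nu> = \<eta> \<and> \<zeta> \<noteq> {#}}. d \<zeta> * t \<nu>)"
    by (intro sum.cong) auto
  then show ?thesis by (simp add: cauchy_split)
qed

lemma cauchy_inv_ex1: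
  assumes "d {#} \<noteq> 0"
  shows "\<exists>!h. cauchy d h = one_c"
proof (rule triangular_equation_ex1[where R = "Wellfounded.measure size"])
  fix s t :: "'a cs" and x
  assume "\<And>y. (y, x) \<in> Wellfounded.measure size \<Longrightarrow> s y = t y"
  then show "cauchy d s x - d {#} * s x = cauchy d t x - d {#} * t x"
    by (intro cauchy_triangular) simp
qed (simp_all add: assms)

lemma cauchy_inv: "d {#} \<noteq> 0 \<Longrightarrow> cauchy d (cauchy_inv d) = one_c"
  unfolding cauchy_inv_def by (rule theI'[OF cauchy_inv_ex1])

lemma cauchy_inv_unique: "d {#} \<noteq> 0 \<Longrightarrow> cauchy d h = one_c \<Longrightarrow> cauchy_inv d = h"
  unfolding cauchy_inv_def by (rule the1_equality[OF cauchy_inv_ex1])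

lemma cauchy_inv_one_c: "cauchy_inv one_c = one_c"
  by (rule cauchy_inv_unique) (simp_all add: one_c_def cauchy_one_left)

lemma cauchy_inv_empty: "d {#} \<noteq> 0 \<Longrightarrow> cauchy_inv d {#} = inverse (d {#})"
  using cauchy_inv[of d] cauchy_empty[of d "cauchy_inv d"]
  by (metis inverse_unique one_c_def)

section \<open>Wiener-Fliess composition\<close>

lemma shuf_pow_empty [simp]: "shuf_pow c {#} = one_s"
  by (simp add: shuf_pow_def)

lemma shuf_pow_add_mset [simp]: "shuf_pow c (add_mset i \<eta>) = shuffle (c i) (shuf_pow c \<eta>)"
proof -
  interpret comp_fun_commute "\<lambda>i s. shuffle (c i) s"
    by unfold_locales (simp add: fun_eq_iff shuffle_left_commute)
  show ?thesis by (simp add: shuf_pow_def)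
qed

lemma shuf_pow_union: "shuf_pow c (\<eta> + \<zeta>) = shuffle (shuf_pow c \<eta>) (shuf_pow c \<zeta>)"
  by (induction \<eta>) (simp_all add: shuffle_assoc)

lemma vanishes_below_shuf_pow: "proper c \<Longrightarrow> vanishes_below (size \<eta>) (shuf_pow c \<eta>)"
proof (induction \<eta>)
  case (add i \<eta>)
  then have "vanishes_below 1 (c i)" by (simp add: proper_def vanishes_below_def)
  from vanishes_below_shuffle[OF this add.IH[OF add.prems]] show ?case by simp
qed simp

lemma shuf_pow_eq_0: "proper c \<Longrightarrow> length w < size \<eta> \<Longrightarrow> shuf_pow c \<eta> w = 0"
  using vanishes_below_shuf_pow by (auto simp: vanishes_below_def)

lemma finite_multisets_size_le_UNIV: "finite {\<eta> :: 'q::finite multiset. size \<eta> \<le> n}"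
  using finite_multisets_size_le[of "UNIV :: 'q set" n] by simp

lemma wf_comp_eq_sum:
  fixes c :: "'q::finite \<Rightarrow> 'a ncs"
  assumes "proper c" and "length w \<le> n"
  shows "wf_comp d c i w = (\<Sum>\<eta> | size \<eta> \<le> n. d i \<eta> * shuf_pow c \<eta> w)"
proof -
  have "((\<lambda>\<eta>. d i \<eta> * shuf_pow c \<eta> w) has_sum (\<Sum>\<eta> | size \<eta> \<le> n. d i \<eta> * shuf_pow c \<eta> w)) UNIV"
    using assms by (intro has_sum_finite_support finite_multisets_size_le_UNIV) (simp add: shuf_pow_eq_0)
  then show ?thesis unfolding wf_comp_def by (rule infsumI)
qed

lemma wf_comp_one_c: "wf_comp (\<lambda>i. one_c) c = (\<lambda>i. one_s)"
proof (intro ext)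
  fix i w
  have "((\<lambda>\<eta>. one_c \<eta> * shuf_pow c \<eta> w) has_sum (\<Sum>\<eta>\<in>{{#}}. one_c \<eta> * shuf_pow c \<eta> w)) UNIV"
    by (rule has_sum_finite_support) (simp_all add: one_c_def)
  then show "wf_comp (\<lambda>i. one_c) c i w = one_s w"
    unfolding wf_comp_def by (simp add: infsumI one_c_def)
qed

lemma wf_comp_Nil:
  fixes c :: "'q::finite \<Rightarrow> 'a ncs"
  assumes "proper c"
  shows "wf_comp d c i [] = d i {#}"
proof -
  have "{\<eta> :: 'q multiset. size \<eta> \<le> 0} = {{#}}" by auto
  then show ?thesis using wf_comp_eq_sum[OF assms, of "[]" 0] by (simp add: one_s_def)
qed

lemma sum_cauchy_regroup:
  fixes x y :: "'q::finite cs"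
  assumes "\<And>\<eta>. n < size \<eta> \<Longrightarrow> p \<eta> = 0"
  shows "(\<Sum>(\<zeta>, \<nu>) \<in> {\<zeta>. size \<zeta> \<le> n} \<times> {\<nu>. size \<nu> \<le> n}. x \<zeta> * y \<nu> * p (\<zeta> + \<nu>)) =
         (\<Sum>\<eta> | size \<eta> \<le> 2 * n. cauchy x y \<eta> * p \<eta>)"
proof -
  define S where "S = {\<eta> :: 'q multiset. size \<eta> \<le> n}"
  define f where "f = (\<lambda>(\<zeta>, \<nu>). x \<zeta> * y \<nu> * p (\<zeta> + \<nu>))"
  have "(\<Sum>q\<in>S \<times> S. f q) = (\<Sum>\<eta> | size \<eta> \<le> 2 * n. \<Sum>q | q \<in> S \<times> S \<and> fst q + snd q = \<eta>. f q)"
    by (rule sum.group[symmetric]) (auto simp: S_def finite_multisets_size_le_UNIV)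
  also have "\<dots> = (\<Sum>\<eta> | size \<eta> \<le> 2 * n. cauchy x y \<eta> * p \<eta>)"
  proof (rule sum.cong[OF refl])
    fix \<eta> :: "'q multiset"
    show "(\<Sum>q | q \<in> S \<times> S \<and> fst q + snd q = \<eta>. f q) = cauchy x y \<eta> * p \<eta>"
    proof (cases "size \<eta> \<le> n")
      case True
      then have "{q. q \<in> S \<times> S \<and> fst q + snd q = \<eta>} = {(\<zeta>, \<nu>). \<zeta> + \<nu> = \<eta>}"
        by (auto simp: S_def)
      then have "(\<Sum>q | q \<in> S \<times> S \<and> fst q + snd q = \<eta>. f q) =
                 (\<Sum>(\<zeta>, \<nu>) \<in> {(\<zeta>, \<nu>). \<zeta> + \<nu> = \<eta>}. x \<zeta> * y \<nu> * p \<eta>)"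
        by (intro sum.cong) (auto simp: f_def)
      then show ?thesis by (simp add: cauchy_def sum_distrib_right case_prod_beta)
    qed (simp add: f_def case_prod_beta assms)
  qed
  finally show ?thesis by (simp add: S_def f_def)
qed

lemma wf_comp_cauchy:
  fixes c :: "'q::finite \<Rightarrow> 'a ncs"
  assumes "proper c"
  shows "wf_comp (\<lambda>i. cauchy (d1 i) (d2 i)) c = (\<lambda>i. shuffle (wf_comp d1 c i) (wf_comp d2 c i))"
proof (intro ext)
  fix i and w :: "'a list"
  let ?P = "shuf_pow c" and ?S = "{\<eta>. size \<eta> \<le> length w}"
  have "shuffle (wf_comp d1 c i) (wf_comp d2 c i) w =
        shuffle (\<lambda>v. \<Sum>\<zeta>\<in>?S. d1 i \<zeta> * ?P \<zeta> v) (\<lambda>v. \<Sum>\<nu>\<in>?S. d2 i \<nu> * ?P \<nu> v) w"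
    by (intro shuffle_cong_upto) (simp_all add: wf_comp_eq_sum[OF assms])
  also have "\<dots> = (\<Sum>(\<zeta>, \<nu>) \<in> ?S \<times> ?S. d1 i \<zeta> * d2 i \<nu> * ?P (\<zeta> + \<nu>) w)"
    by (simp add: shuffle_sum_left shuffle_sum_right sum.cartesian_product shuf_pow_union
        sum_distrib_left mult.assoc mult.left_commute case_prod_beta)
  also have "\<dots> = (\<Sum>\<eta> | size \<eta> \<le> 2 * length w. cauchy (d1 i) (d2 i) \<eta> * ?P \<eta> w)"
    by (rule sum_cauchy_regroup) (simp add: shuf_pow_eq_0[OF assms])
  also have "\<dots> = wf_comp (\<lambda>i. cauchy (d1 i) (d2 i)) c i w"
    by (rule wf_comp_eq_sum[OF assms, symmetric]) simp
  finally show "wf_comp (\<lambda>i. cauchy (d1 i) (d2 i)) c i w = shuffle (wf_comp d1 c i) (wf_comp d2 c i) w" ..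
qed

lemma wf_comp_cauchy_inv:
  fixes c :: "'q::finite \<Rightarrow> 'a ncs"
  assumes "proper c" and "\<And>i. d i {#} \<noteq> 0"
  shows "wf_comp (\<lambda>i. cauchy_inv (d i)) c = (\<lambda>i. shuffle_inv (wf_comp d c i))"
proof
  fix i
  show "wf_comp (\<lambda>i. cauchy_inv (d i)) c i = shuffle_inv (wf_comp d c i)"
  proof (rule shuffle_inv_unique[symmetric])
    show "wf_comp d c i [] \<noteq> 0" using assms by (simp add: wf_comp_Nil)
    have "shuffle (wf_comp d c i) (wf_comp (\<lambda>i. cauchy_inv (d i)) c i) =
          wf_comp (\<lambda>i. cauchy (d i) (cauchy_inv (d i))) c i"
      by (simp add: wf_comp_cauchy[OF assms(1)])
    also have "\<dots> = one_s"
      using assms(2) by (simp add: cauchy_inv wf_comp_one_c)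
    finally show "shuffle (wf_comp d c i) (wf_comp (\<lambda>i. cauchy_inv (d i)) c i) = one_s" .
  qed
qed

section \<open>Multiplicative mixed composition\<close>

lemma vanishes_below_phibar: "vanishes_below k s \<Longrightarrow> vanishes_below (k + length \<eta>) (phibar g \<eta> s)"
proof (induction \<eta>)
  case (Cons b \<eta>)
  have "vanishes_below (Suc (k + length \<eta>)) (lcat b t)" if "vanishes_below (k + length \<eta>) t" for t
    using that by (auto simp: vanishes_below_def lcat_def split: list.splits)
  with Cons vanishes_below_shuffle_right show ?case by (cases b) auto
qed simp

lemma vanishes_below_phibar_one_s: "vanishes_below (length \<eta>) (phibar g \<eta> one_s)"
  using vanishes_below_phibar[where k = 0 and s = one_s and g = g and \<eta> = \<eta>] by simp

lemma phibar_eq_0: "length w < length \<eta> \<Longrightarrow> phibar g \<eta> one_s w = 0"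
  using vanishes_below_phibar_one_s[of \<eta> g] by (simp add: vanishes_below_def)

lemma finite_words_length_le: "finite {w :: 'a::finite list. length w \<le> n}"
  using finite_lists_length_le[of "UNIV :: 'a set" n] by simp

lemma length_induct_Cons_option [case_names Nil None Some]:
  assumes "P []"
    and "\<And>v. (\<And>u. length u \<le> length v \<Longrightarrow> P u) \<Longrightarrow> P (None # v)"
    and "\<And>i v. (\<And>u. length u \<le> length v \<Longrightarrow> P u) \<Longrightarrow> P (Some i # v)"
  shows "P w"
proof (induction w rule: length_induct)
  case (1 w)
  show ?case
  proof (cases w)
    case (Cons a v)
    with "1" have IH: "P u" if "length u \<le> length v" for u
      using that by simp
    show ?thesis
    proof (cases a)
      case None
      from assms(2)[OF IH] show ?thesis by (simp add: Cons None)
    next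
      case (Some i)
      from assms(3)[OF IH] show ?thesis by (simp add: Cons Some)
    qed
  qed (simp add: assms(1))
qed

lemma mixed_comp_has_sum:
  fixes g :: "'m::finite \<Rightarrow> 'm option ncs"
  assumes "length w \<le> n"
  shows "((\<lambda>\<eta>. c \<eta> * phibar g \<eta> one_s w) has_sum
           (\<Sum>\<eta> | length \<eta> \<le> n. c \<eta> * phibar g \<eta> one_s w)) UNIV"
  using assms by (intro has_sum_finite_support finite_words_length_le) (simp add: phibar_eq_0)

lemma mixed_comp_eq_sum:
  fixes g :: "'m::finite \<Rightarrow> 'm option ncs"
  assumes "length w \<le> n"
  shows "mixed_comp c g w = (\<Sum>\<eta> | length \<eta> \<le> n. c \<eta> * phibar g \<eta> one_s w)"
  unfolding mixed_comp_def using mixed_comp_has_sum[OF assms] by (rule infsumI)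

lemma mixed_comp_Nil:
  fixes g :: "'m::finite \<Rightarrow> 'm option ncs"
  shows "mixed_comp c g [] = c []"
proof -
  have "{\<eta> :: 'm option list. length \<eta> \<le> 0} = {[]}" by auto
  then show ?thesis using mixed_comp_eq_sum[of "[]" 0 c g] by (simp add: one_s_def)
qed

lemma mixed_comp_Cons:
  fixes g :: "'m::finite \<Rightarrow> 'm option ncs"
  shows "mixed_comp c g (a # w) = infsum (\<lambda>\<eta>. c (a # \<eta>) * phibar g (a # \<eta>) one_s (a # w)) UNIV"
proof -
  let ?f = "\<lambda>\<eta>. c \<eta> * phibar g \<eta> one_s (a # w)"
  have "mixed_comp c g (a # w) = (\<Sum>\<eta> | length \<eta> \<le> length (a # w). ?f \<eta>)"
    by (rule mixed_comp_eq_sum) simp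
  then have "(?f has_sum mixed_comp c g (a # w)) UNIV"
    using mixed_comp_has_sum[of "a # w" "length (a # w)" c g] by simp
  moreover have "?f \<eta> = 0" if "\<eta> \<notin> range (Cons a)" for \<eta>
  proof (cases \<eta>)
    case (Cons b \<eta>')
    with that show ?thesis by (cases b) auto
  qed (simp add: one_s_def)
  ultimately have "((?f \<circ> Cons a) has_sum mixed_comp c g (a # w)) UNIV"
    using has_sum_reindex_range[of "Cons a" ?f] by simp
  then show ?thesis by (simp add: infsumI o_def)
qed

lemma mixed_comp_None:
  fixes g :: "'m::finite \<Rightarrow> 'm option ncs"
  shows "mixed_comp c g (None # w) = mixed_comp (lshift None c) g w"
  unfolding mixed_comp_Cons by (simp add: mixed_comp_def lshift_def)

lemma mixed_comp_Some:
  fixes g :: "'m::finite \<Rightarrow> 'm option ncs"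
  shows "mixed_comp c g (Some i # w) = shuffle (g i) (mixed_comp (lshift (Some i) c) g) w"
proof -
  let ?c = "lshift (Some i) c" and ?P = "\<lambda>\<eta>. phibar g \<eta> one_s" and ?n = "length w"
  have "shuffle (g i) (?P \<eta>) w = 0" if "?n < length \<eta>" for \<eta>
    using vanishes_below_shuffle_right[OF vanishes_below_phibar_one_s[of \<eta> g], of "g i"] that
    by (simp add: vanishes_below_def)
  then have "((\<lambda>\<eta>. ?c \<eta> * shuffle (g i) (?P \<eta>) w) has_sum
              (\<Sum>\<eta> | length \<eta> \<le> ?n. ?c \<eta> * shuffle (g i) (?P \<eta>) w)) UNIV"
    by (intro has_sum_finite_support finite_words_length_le) simp
  then have "mixed_comp c g (Some i # w) = (\<Sum>\<eta> | length \<eta> \<le> ?n. ?c \<eta> * shuffle (g i) (?P \<eta>) w)"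
    unfolding mixed_comp_Cons by (simp add: infsumI lshift_def)
  also have "\<dots> = shuffle (g i) (\<lambda>v. \<Sum>\<eta> | length \<eta> \<le> ?n. ?c \<eta> * ?P \<eta> v) w"
    by (simp add: shuffle_sum_right)
  also have "\<dots> = shuffle (g i) (mixed_comp ?c g) w"
    by (intro shuffle_cong_upto) (simp_all add: mixed_comp_eq_sum)
  finally show ?thesis .
qed

lemma lshift_mixed_comp_None:
  fixes g :: "'m::finite \<Rightarrow> 'm option ncs"
  shows "lshift None (mixed_comp c g) = mixed_comp (lshift None c) g"
  by (simp add: lshift_def mixed_comp_None)

lemma lshift_mixed_comp_Some:
  fixes g :: "'m::finite \<Rightarrow> 'm option ncs"
  shows "lshift (Some i) (mixed_comp c g) = shuffle (g i) (mixed_comp (lshift (Some i) c) g)"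
  by (simp add: lshift_def mixed_comp_Some)

lemma mixed_comp_sum:
  fixes g :: "'m::finite \<Rightarrow> 'm option ncs"
  shows "mixed_comp (\<lambda>v. \<Sum>j\<in>A. r j * f j v) g w = (\<Sum>j\<in>A. r j * mixed_comp (f j) g w)"
  by (simp add: mixed_comp_eq_sum[of w "length w"] sum_distrib_left sum_distrib_right
      mult.assoc sum.swap[of _ A])

lemma mixed_comp_add:
  fixes g :: "'m::finite \<Rightarrow> 'm option ncs"
  shows "mixed_comp (\<lambda>v. c v + c' v) g = (\<lambda>w. mixed_comp c g w + mixed_comp c' g w)"
proof
  fix w :: "'m option list"
  show "mixed_comp (\<lambda>v. c v + c' v) g w = mixed_comp c g w + mixed_comp c' g w"
    by (simp add: mixed_comp_eq_sum[of w "length w"] distrib_right sum.distrib)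
qed

lemma mixed_comp_cong_upto:
  fixes g :: "'m::finite \<Rightarrow> 'm option ncs"
  assumes "\<And>v. length v \<le> length w \<Longrightarrow> c v = c' v"
  shows "mixed_comp c g w = mixed_comp c' g w"
  using assms by (simp add: mixed_comp_eq_sum[of w "length w"])

lemma mixed_comp_cong_right:
  fixes g g' :: "'m::finite \<Rightarrow> 'm option ncs"
  shows "(\<And>i v. length v < length w \<Longrightarrow> g i v = g' i v) \<Longrightarrow> mixed_comp c g w = mixed_comp c g' w"
proof (induction w arbitrary: c rule: length_induct_Cons_option)
  case (Some i v)
  have "shuffle (g i) (mixed_comp (lshift (Some i) c) g) v =
        shuffle (g' i) (mixed_comp (lshift (Some i) c) g') v"
  proof (rule shuffle_cong_upto)
    fix u :: "'m option list" assume u: "length u \<le> length v"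
    then show "g i u = g' i u" by (simp add: Some.prems)
    show "mixed_comp (lshift (Some i) c) g u = mixed_comp (lshift (Some i) c) g' u"
      using u by (intro Some.IH) (simp_all add: Some.prems)
  qed
  then show ?case by (simp add: mixed_comp_Some)
qed (simp_all add: mixed_comp_Nil mixed_comp_None)

lemma mixed_comp_one_left [simp]:
  fixes g :: "'m::finite \<Rightarrow> 'm option ncs"
  shows "mixed_comp one_s g = one_s"
proof
  fix w :: "'m option list"
  have "mixed_comp one_s g w = (\<Sum>\<eta> | length \<eta> \<le> length w. if \<eta> = [] then phibar g \<eta> one_s w else 0)"
    by (simp add: mixed_comp_eq_sum[of w "length w"] one_s_def) (rule sum.cong; simp)
  then show "mixed_comp one_s g w = one_s w"
    by (simp add: sum.delta finite_words_length_le one_s_def)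
qed

lemma phibar_unit: "phibar (\<lambda>i. one_s) \<eta> one_s = (\<lambda>w. if w = \<eta> then 1 else 0)"
proof (induction \<eta>)
  case (Cons b \<eta>)
  have "lcat b (\<lambda>w. if w = \<eta> then 1 else 0) = (\<lambda>w. if w = b # \<eta> then 1 else 0)"
    by (simp add: fun_eq_iff lcat_def split: list.splits)
  with Cons show ?case by (cases b) simp_all
qed (simp add: one_s_def fun_eq_iff)

lemma mixed_comp_one_right [simp]:
  fixes c :: "'m::finite option ncs"
  shows "mixed_comp c (\<lambda>i. one_s) = c"
proof
  fix w :: "'m option list"
  have "mixed_comp c (\<lambda>i. one_s) w = (\<Sum>\<eta> | length \<eta> \<le> length w. if w = \<eta> then c \<eta> else 0)"
    by (simp add: mixed_comp_eq_sum[of w "length w"] phibar_unit) (rule sum.cong; simp)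
  then show "mixed_comp c (\<lambda>i. one_s) w = c w"
    by (simp add: sum.delta' finite_words_length_le)
qed

lemma mixed_comp_shuffle:
  fixes g :: "'m::finite \<Rightarrow> 'm option ncs"
  shows "mixed_comp (shuffle c d) g = shuffle (mixed_comp c g) (mixed_comp d g)"
proof
  fix w :: "'m option list"
  show "mixed_comp (shuffle c d) g w = shuffle (mixed_comp c g) (mixed_comp d g) w"
  proof (induction w arbitrary: c d rule: length_induct_Cons_option)
    case Nil
    then show ?case by (simp add: mixed_comp_Nil shuffle_Nil)
  next
    case (None v)
    then show ?case
      by (simp add: mixed_comp_None lshift_shuffle mixed_comp_add shuffle_Cons lshift_mixed_comp_None)
  next
    case (Some i v)
    let ?l = "lshift (Some i)"
    have "mixed_comp (shuffle c d) g (Some i # v) =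
          shuffle (g i) (\<lambda>u. mixed_comp (shuffle (?l c) d) g u + mixed_comp (shuffle c (?l d)) g u) v"
      by (simp add: mixed_comp_Some lshift_shuffle mixed_comp_add)
    also have "\<dots> = shuffle (g i) (\<lambda>u. shuffle (mixed_comp (?l c) g) (mixed_comp d g) u +
                                      shuffle (mixed_comp c g) (mixed_comp (?l d) g) u) v"
      by (intro shuffle_cong_upto) (simp_all add: Some)
    also have "\<dots> = shuffle (mixed_comp c g) (mixed_comp d g) (Some i # v)"
      by (simp add: shuffle_Cons lshift_mixed_comp_Some shuffle_add_right shuffle_ac)
    finally show ?case .
  qed
qed

definition fb_prod :: "('m \<Rightarrow> 'm option ncs) \<Rightarrow> ('m \<Rightarrow> 'm option ncs) \<Rightarrow> 'm \<Rightarrow> 'm option ncs" where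
  "fb_prod g h = (\<lambda>i. shuffle (mixed_comp (g i) h) (h i))"

lemma mixed_comp_assoc:
  fixes g h :: "'m::finite \<Rightarrow> 'm option ncs"
  shows "mixed_comp (mixed_comp c g) h = mixed_comp c (fb_prod g h)"
proof
  fix w :: "'m option list"
  show "mixed_comp (mixed_comp c g) h w = mixed_comp c (fb_prod g h) w"
  proof (induction w arbitrary: c rule: length_induct_Cons_option)
    case Nil
    then show ?case by (simp add: mixed_comp_Nil)
  next
    case (None v)
    then show ?case by (simp add: mixed_comp_None lshift_mixed_comp_None)
  next
    case (Some i v)
    let ?c = "lshift (Some i) c"
    have "mixed_comp (mixed_comp c g) h (Some i # v) =
          shuffle (h i) (shuffle (mixed_comp (g i) h) (mixed_comp (mixed_comp ?c g) h)) v"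
      by (simp add: mixed_comp_Some lshift_mixed_comp_Some mixed_comp_shuffle)
    also have "\<dots> = shuffle (h i) (shuffle (mixed_comp (g i) h) (mixed_comp ?c (fb_prod g h))) v"
      by (intro shuffle_cong_upto refl) (simp_all add: Some)
    also have "\<dots> = mixed_comp c (fb_prod g h) (Some i # v)"
      by (simp add: mixed_comp_Some fb_prod_def shuffle_ac)
    finally show ?case .
  qed
qed

lemma mixed_comp_shuf_pow:
  fixes g :: "'m::finite \<Rightarrow> 'm option ncs"
  shows "mixed_comp (shuf_pow c \<eta>) g = shuf_pow (\<lambda>j. mixed_comp (c j) g) \<eta>"
  by (induction \<eta>) (simp_all add: mixed_comp_shuffle)

lemma proper_mixed_comp:
  fixes g :: "'m::finite \<Rightarrow> 'm option ncs"
  shows "proper (\<lambda>j. mixed_comp (c j) g) \<longleftrightarrow> proper c"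
  by (simp add: proper_def mixed_comp_Nil)

lemma wf_comp_mixed_comp:
  fixes g :: "'m::finite \<Rightarrow> 'm option ncs" and c :: "'q::finite \<Rightarrow> 'm option ncs"
  assumes "proper c"
  shows "wf_comp d (\<lambda>j. mixed_comp (c j) g) = (\<lambda>i. mixed_comp (wf_comp d c i) g)"
proof (intro ext)
  fix i and w :: "'m option list"
  let ?S = "{\<eta>. size \<eta> \<le> length w}"
  have "mixed_comp (wf_comp d c i) g w = mixed_comp (\<lambda>v. \<Sum>\<eta>\<in>?S. d i \<eta> * shuf_pow c \<eta> v) g w"
    by (rule mixed_comp_cong_upto) (simp add: wf_comp_eq_sum[OF assms])
  also have "\<dots> = (\<Sum>\<eta>\<in>?S. d i \<eta> * shuf_pow (\<lambda>j. mixed_comp (c j) g) \<eta> w)"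
    by (simp add: mixed_comp_sum mixed_comp_shuf_pow)
  also have "\<dots> = wf_comp d (\<lambda>j. mixed_comp (c j) g) i w"
    by (rule wf_comp_eq_sum[symmetric]) (simp_all add: assms proper_mixed_comp)
  finally show "wf_comp d (\<lambda>j. mixed_comp (c j) g) i w = mixed_comp (wf_comp d c i) g w" ..
qed

section \<open>Feedback group inverse and static feedback\<close>

lemma comp_inv_ex1:
  fixes G :: "'m::finite \<Rightarrow> 'm option ncs"
  shows "\<exists>!h. h = (\<lambda>i. mixed_comp (shuffle_inv (G i)) h)"
proof -
  define T where "T k = (\<lambda>w i. mixed_comp (shuffle_inv (G i)) (\<lambda>j v. k v j) w)"
    for k :: "'m option list \<Rightarrow> 'm \<Rightarrow> real"
  have "\<exists>!k. T k = k"
  proof (rule wf_fixpoint_ex1[where R = "Wellfounded.measure length"])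
    fix k k' :: "'m option list \<Rightarrow> 'm \<Rightarrow> real" and w :: "'m option list"
    assume "\<And>v. (v, w) \<in> Wellfounded.measure length \<Longrightarrow> k v = k' v"
    then show "T k w = T k' w" unfolding T_def by (auto intro!: mixed_comp_cong_right)
  qed simp
  then obtain k where k: "T k = k" and unique: "\<And>k'. T k' = k' \<Longrightarrow> k' = k" by blast
  have fixed_iff: "h = (\<lambda>i. mixed_comp (shuffle_inv (G i)) h) \<longleftrightarrow> T (\<lambda>w i. h i w) = (\<lambda>w i. h i w)" for h
    by (auto simp: T_def fun_eq_iff)
  show ?thesis
  proof (rule ex1I[where a = "\<lambda>i w. k w i"])
    show "(\<lambda>i w. k w i) = (\<lambda>i. mixed_comp (shuffle_inv (G i)) (\<lambda>i w. k w i))"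
      using fixed_iff k by simp
    fix h assume "h = (\<lambda>i. mixed_comp (shuffle_inv (G i)) h)"
    then have "(\<lambda>w i. h i w) = k" using fixed_iff unique by blast
    then show "h = (\<lambda>i w. k w i)" by auto
  qed
qed

lemma comp_inv_fixpoint:
  fixes G :: "'m::finite \<Rightarrow> 'm option ncs"
  shows "comp_inv G = (\<lambda>i. mixed_comp (shuffle_inv (G i)) (comp_inv G))"
  unfolding comp_inv_def by (rule theI'[OF comp_inv_ex1])

lemma comp_inv_unique:
  fixes G h :: "'m::finite \<Rightarrow> 'm option ncs"
  shows "h = (\<lambda>i. mixed_comp (shuffle_inv (G i)) h) \<Longrightarrow> comp_inv G = h"
  unfolding comp_inv_def by (rule the1_equality[OF comp_inv_ex1])

lemma fb_prod_comp_inv: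
  fixes G :: "'m::finite \<Rightarrow> 'm option ncs"
  assumes "\<And>i. G i [] \<noteq> 0"
  shows "fb_prod G (comp_inv G) = (\<lambda>i. one_s)"
proof
  fix i
  have "fb_prod G (comp_inv G) i = mixed_comp (shuffle (G i) (shuffle_inv (G i))) (comp_inv G)"
    using fun_cong[OF comp_inv_fixpoint[of G], of i] by (simp add: fb_prod_def mixed_comp_shuffle)
  also have "\<dots> = one_s" using assms by (simp add: shuffle_inv)
  finally show "fb_prod G (comp_inv G) i = one_s" .
qed

lemma comp_inv_eqI:
  fixes G h :: "'m::finite \<Rightarrow> 'm option ncs"
  assumes "\<And>i. G i [] \<noteq> 0" and "fb_prod G h = (\<lambda>i. one_s)"
  shows "comp_inv G = h"
proof (rule comp_inv_unique, rule ext)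
  fix i
  have "mixed_comp (G i) h [] \<noteq> 0" using assms(1) by (simp add: mixed_comp_Nil)
  moreover have "shuffle (mixed_comp (G i) h) (h i) = one_s"
    using assms(2) by (simp add: fb_prod_def fun_eq_iff)
  moreover have "shuffle (mixed_comp (G i) h) (mixed_comp (shuffle_inv (G i)) h) = one_s"
    using assms(1) by (simp add: mixed_comp_shuffle[symmetric] shuffle_inv)
  ultimately show "h i = mixed_comp (shuffle_inv (G i)) h"
    by (metis shuffle_inv_unique)
qed

lemma comp_inv_one: "comp_inv (\<lambda>i :: 'm::finite. one_s) = (\<lambda>i. one_s)"
  by (rule comp_inv_eqI) (simp_all add: fb_prod_def one_s_def)

lemma comp_inv_shuffle:
  fixes G H :: "'m::finite \<Rightarrow> 'm option ncs"
  assumes "\<And>i. G i [] \<noteq> 0" and "\<And>i. H i [] \<noteq> 0"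
  shows "comp_inv (\<lambda>i. shuffle (G i) (H i)) =
         fb_prod (comp_inv G) (comp_inv (\<lambda>i. mixed_comp (H i) (comp_inv G)))"
    (is "_ = fb_prod ?k1 ?k2")
proof (rule comp_inv_eqI)
  show "shuffle (G i) (H i) [] \<noteq> 0" for i using assms by (simp add: shuffle_Nil)
  show "fb_prod (\<lambda>i. shuffle (G i) (H i)) (fb_prod ?k1 ?k2) = (\<lambda>i. one_s)"
  proof
    fix i
    let ?a = "mixed_comp (mixed_comp (G i) ?k1) ?k2" and ?b = "mixed_comp (mixed_comp (H i) ?k1) ?k2"
      and ?m = "mixed_comp (?k1 i) ?k2"
    have "shuffle (mixed_comp (G i) ?k1) (?k1 i) = one_s"
      using fb_prod_comp_inv[of G] assms(1) by (simp add: fb_prod_def fun_eq_iff)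
    then have a: "shuffle ?a ?m = one_s" by (metis mixed_comp_one_left mixed_comp_shuffle)
    have b: "shuffle ?b (?k2 i) = one_s"
      using fb_prod_comp_inv[of "\<lambda>i. mixed_comp (H i) ?k1"] assms(2)
      by (simp add: fb_prod_def fun_eq_iff mixed_comp_Nil)
    have "fb_prod (\<lambda>i. shuffle (G i) (H i)) (fb_prod ?k1 ?k2) i = shuffle (shuffle ?a ?b) (shuffle ?m (?k2 i))"
      by (simp add: fb_prod_def mixed_comp_shuffle mixed_comp_assoc)
    also have "\<dots> = shuffle (shuffle ?a ?m) (shuffle ?b (?k2 i))"
      by (simp add: shuffle_ac)
    finally show "fb_prod (\<lambda>i. shuffle (G i) (H i)) (fb_prod ?k1 ?k2) i = one_s"
      by (simp add: a b)
  qed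
qed

lemma proper_sfb:
  fixes c :: "'q \<Rightarrow> 'm::finite option ncs"
  shows "proper (sfb c d) \<longleftrightarrow> proper c"
  by (simp add: sfb_def proper_def mixed_comp_Nil)

lemma sfb_one_c:
  fixes c :: "'q \<Rightarrow> 'm::finite option ncs"
  shows "sfb c (\<lambda>i. one_c) = c"
  by (simp add: sfb_def cauchy_inv_one_c wf_comp_one_c comp_inv_one)

lemma sfb_sfb:
  fixes c :: "'q::finite \<Rightarrow> 'm::finite option ncs"
  assumes "proper c" and "\<And>i. d1 i {#} \<noteq> 0" and "\<And>i. d2 i {#} \<noteq> 0"
  shows "sfb (sfb c d1) d2 = sfb c (\<lambda>i. cauchy (d1 i) (d2 i))"
proof -
  let ?G = "wf_comp (\<lambda>i. cauchy_inv (d1 i)) c" and ?H = "wf_comp (\<lambda>i. cauchy_inv (d2 i)) c"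
  define k1 where "k1 = comp_inv ?G"
  define k2 where "k2 = comp_inv (\<lambda>i. mixed_comp (?H i) k1)"
  have G0: "?G i [] \<noteq> 0" and H0: "?H i [] \<noteq> 0" for i
    using assms by (simp_all add: wf_comp_Nil cauchy_inv_empty)
  have dd0: "cauchy (d1 i) (d2 i) {#} \<noteq> 0" for i
    using assms by (simp add: cauchy_empty)
  have "sfb (sfb c d1) d2 = (\<lambda>j. mixed_comp (mixed_comp (c j) k1) k2)"
    using assms(1) by (simp add: sfb_def k1_def k2_def wf_comp_mixed_comp)
  also have "\<dots> = (\<lambda>j. mixed_comp (c j) (fb_prod k1 k2))"
    by (simp add: mixed_comp_assoc)
  also have "fb_prod k1 k2 = comp_inv (\<lambda>i. shuffle (?G i) (?H i))"
    unfolding k1_def k2_def using G0 H0 by (rule comp_inv_shuffle[symmetric])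
  also have "(\<lambda>i. shuffle (?G i) (?H i)) = wf_comp (\<lambda>i. cauchy_inv (cauchy (d1 i) (d2 i))) c"
    using assms G0 H0 dd0
    by (simp add: wf_comp_cauchy_inv[OF assms(1)] wf_comp_cauchy[OF assms(1)] shuffle_inv_shuffle wf_comp_Nil)
  finally show ?thesis by (simp add: sfb_def)
qed

theorem theorem19:
  fixes c :: "'q::finite \<Rightarrow> ('m::finite option list \<Rightarrow> real)"
    and d1 d2 :: "'m \<Rightarrow> 'q multiset \<Rightarrow> real"
  assumes "proper c" and "purely_improper_c d1" and "purely_improper_c d2"
  shows "proper (sfb c d1) \<and> sfb c (\<lambda>i. one_c) = c \<and>
         sfb (sfb c d1) d2 = sfb c (\<lambda>i. cauchy (d1 i) (d2 i))"
  using assms by (simp add: proper_sfb sfb_one_c sfb_sfb purely_improper_c_def)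

end
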